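(* If a graph $G$ of order $n(G)$ contains a universal vertex, then $\mathrm{sg_e}(G) \ge n(G)-1$. Moreover, if $G$ has exactly one universal vertex, then $\mathrm{sg_e}(G) = n(G)-1$.
   Context: All graphs are finite, simple and connected. A vertex $u$ is universal if $\deg_G(u) = n(G)-1$. A set $S \subseteq V(G)$ is a strong edge geodetic set of $G$ if one can assign to every unordered pair $\{u,v\}$ of distinct vertices of $S$ either one shortest $u,v$-path $P_{uv}$ in $G$ or no path, in such a way that every edge of $G$ lies on at least one of the assigned paths. The strong edge geodetic number $\mathrm{sg_e}(G)$ is the minimum cardinality of a strong edge geodetic set of $G$. *)

theory Defs
  imports Main
begin

definition simple_graph :: "'a set \<Rightarrow> 'a set set \<Rightarrow> bool" where
  "simple_graph V E \<longleftrightarrow> finite V \<and>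
     (\<forall>e\<in>E. \<exists>u v. e = {u, v} \<and> u \<noteq> v \<and> u \<in> V \<and> v \<in> V)"

definition is_walk :: "'a set set \<Rightarrow> 'a list \<Rightarrow> 'a \<Rightarrow> 'a \<Rightarrow> bool" where
  "is_walk E p u v \<longleftrightarrow> p \<noteq> [] \<and> hd p = u \<and> last p = v \<and>
     (\<forall>i. Suc i < length p \<longrightarrow> {p ! i, p ! Suc i} \<in> E)"

definition connected_graph :: "'a set \<Rightarrow> 'a set set \<Rightarrow> bool" where
  "connected_graph V E \<longleftrightarrow> simple_graph V E \<and>
     (\<forall>u\<in>V. \<forall>v\<in>V. \<exists>p. is_walk E p u v)"

text \<open>Shortest u,v-path: a u,v-walk with the minimum number of vertices
  (hence edges); such a walk is automatically a path.\<close>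
definition shortest_path :: "'a set set \<Rightarrow> 'a list \<Rightarrow> 'a \<Rightarrow> 'a \<Rightarrow> bool" where
  "shortest_path E p u v \<longleftrightarrow> is_walk E p u v \<and>
     (\<forall>q. is_walk E q u v \<longrightarrow> length p \<le> length q)"

definition path_edges :: "'a list \<Rightarrow> 'a set set" where
  "path_edges p = {{p ! i, p ! Suc i} | i. Suc i < length p}"

text \<open>Strong edge geodetic set: to each unordered pair {u,v} of distinct vertices
  of S assign either one shortest u,v-path or nothing, covering all edges.\<close>
definition strong_edge_geodetic :: "'a set \<Rightarrow> 'a set set \<Rightarrow> 'a set \<Rightarrow> bool" where
  "strong_edge_geodetic V E S \<longleftrightarrow> S \<subseteq> V \<and>
     (\<exists>P :: 'a set \<Rightarrow> 'a list option.
        (\<forall>u\<in>S. \<forall>v\<in>S. u \<noteq> v \<longrightarrow>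
           (case P {u, v} of None \<Rightarrow> True
            | Some p \<Rightarrow> shortest_path E p u v \<or> shortest_path E p v u)) \<and>
        (\<forall>e\<in>E. \<exists>u\<in>S. \<exists>v\<in>S. u \<noteq> v \<and>
           (\<exists>p. P {u, v} = Some p \<and> e \<in> path_edges p)))"

definition sge :: "'a set \<Rightarrow> 'a set set \<Rightarrow> nat" where
  "sge V E = (LEAST k. \<exists>S. strong_edge_geodetic V E S \<and> card S = k)"

definition degree :: "'a set \<Rightarrow> 'a set set \<Rightarrow> 'a \<Rightarrow> nat" where
  "degree V E u = card {v \<in> V. {u, v} \<in> E}"

definition universal :: "'a set \<Rightarrow> 'a set set \<Rightarrow> 'a \<Rightarrow> bool" where
  "universal V E u \<longleftrightarrow> u \<in> V \<and> degree V E u = card V - 1"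

end

theory Submission
  imports Defs
begin

text \<open>Let \<open>w\<close> be a universal vertex. Any two vertices are at distance at most 2, so a
  shortest path has at most two edges, and an edge \<open>wx\<close> can only lie on a shortest path
  having \<open>x\<close> as an endpoint. Hence every strong edge geodetic set contains \<open>V - {w}\<close>.
  Conversely, geodesics of the form \<open>ab\<close> or \<open>awb\<close> show that \<open>V - {w}\<close> is strong edge
  geodetic once every \<open>x \<noteq> w\<close> has a non-neighbour \<open>y \<noteq> w\<close> (then \<open>xwy\<close> covers \<open>wx\<close>),
  which is exactly the case when \<open>w\<close> is the only universal vertex.\<close>

lemma path_edges_singleton [simp]: "path_edges [x] = {}"
  unfolding path_edges_def by simp

lemma path_edges_Cons_Cons [simp]:
  "path_edges (x # y # p) = insert {x, y} (path_edges (y # p))"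
  unfolding path_edges_def
  by (auto simp: less_Suc_eq_0_disj) (metis nth_Cons_0, metis nth_Cons_Suc)

lemma is_walk_Nil [simp]: "\<not> is_walk E [] u v"
  unfolding is_walk_def by simp

lemma is_walk_singleton [simp]: "is_walk E [x] u v \<longleftrightarrow> x = u \<and> x = v"
  unfolding is_walk_def by auto

lemma is_walk_Cons_Cons [simp]:
  "is_walk E (x # y # p) u v \<longleftrightarrow> x = u \<and> {x, y} \<in> E \<and> is_walk E (y # p) y v"
  unfolding is_walk_def by (auto simp: less_Suc_eq_0_disj)

lemma is_walk_distinct_length_ge_2:
  assumes "is_walk E p u v" and "u \<noteq> v"
  shows "2 \<le> length p"
  using assms by (cases p; cases "tl p") auto

lemma shortest_path_edge:
  assumes "{u, v} \<in> E" and "u \<noteq> v"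
  shows "shortest_path E [u, v] u v"
  using assms is_walk_distinct_length_ge_2[of E _ u v] unfolding shortest_path_def by force

lemma shortest_path_via:
  assumes "{u, w} \<in> E" and "{w, v} \<in> E" and "{u, v} \<notin> E" and "u \<noteq> v"
  shows "shortest_path E [u, w, v] u v"
  unfolding shortest_path_def
proof (intro conjI allI impI)
  fix q assume q: "is_walk E q u v"
  have "length q \<noteq> 2"
    using q assms(3) by (auto simp: numeral_2_eq_2 length_Suc_conv)
  then show "length [u, w, v] \<le> length q"
    using is_walk_distinct_length_ge_2[OF q assms(4)] by simp
qed (use assms in simp)

lemma simple_graph_no_loop: "simple_graph V E \<Longrightarrow> {u} \<notin> E"
  unfolding simple_graph_def by (metis doubleton_eq_iff insert_absorb2)

lemma universal_iff:
  assumes "simple_graph V E"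
  shows "universal V E w \<longleftrightarrow> w \<in> V \<and> (\<forall>x \<in> V - {w}. {w, x} \<in> E)"
proof -
  define N where "N = {v \<in> V. {w, v} \<in> E}"
  have fin: "finite V" using assms unfolding simple_graph_def by simp
  have N: "N \<subseteq> V - {w}"
    using simple_graph_no_loop[OF assms] unfolding N_def by auto
  have "card N = card (V - {w}) \<longleftrightarrow> N = V - {w}"
    using card_subset_eq[OF _ N] fin by blast
  moreover have "N = V - {w} \<longleftrightarrow> (\<forall>x \<in> V - {w}. {w, x} \<in> E)"
    using N unfolding N_def by blast
  ultimately show ?thesis
    unfolding universal_def degree_def N_def[symmetric] by (auto simp: card_Diff_singleton)
qed

lemma universal_adjacent:
  assumes "simple_graph V E" and "universal V E w" and "x \<in> V" and "x \<noteq> w"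
  shows "{w, x} \<in> E" and "{x, w} \<in> E"
proof -
  show "{w, x} \<in> E" using assms(2-4) by (simp add: universal_iff[OF assms(1)])
  then show "{x, w} \<in> E" by (simp add: insert_commute)
qed

lemma shortest_path_within_distance_2:
  assumes sp: "shortest_path E p a b" and "a \<noteq> b"
    and "is_walk E q a b" and "length q \<le> 3"
  shows "p = [a, b] \<and> {a, b} \<in> E \<or> (\<exists>c. p = [a, c, b] \<and> {a, b} \<notin> E)"
proof -
  have walk: "is_walk E p a b" and min: "\<And>q. is_walk E q a b \<Longrightarrow> length p \<le> length q"
    using sp unfolding shortest_path_def by auto
  have "2 \<le> length p" "length p \<le> 3"
    using is_walk_distinct_length_ge_2[OF walk \<open>a \<noteq> b\<close>] min[OF assms(3)] assms(4) by auto
  then consider x y where "p = [x, y]" | x y z where "p = [x, y, z]"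
    by (auto simp: numeral_2_eq_2 numeral_3_eq_3 length_Suc_conv le_Suc_eq)
  then show ?thesis
  proof cases
    case 1
    then show ?thesis using walk by auto
  next
    case 2
    moreover have "{a, b} \<notin> E"
      using min[of "[a, b]"] 2 by fastforce
    ultimately show ?thesis using walk by auto
  qed
qed

lemma universal_edge_on_shortest_path:
  assumes G: "simple_graph V E" and w: "universal V E w"
    and sp: "shortest_path E p a b" and "a \<in> V" "b \<in> V" "a \<noteq> b"
    and e: "{w, x} \<in> path_edges p" and "x \<noteq> w"
  shows "x = a \<or> x = b"
proof -
  note adj = universal_adjacent[OF G w]
  have "\<exists>q. is_walk E q a b \<and> length q \<le> 3"
  proof (cases "{a, b} \<in> E")
    case True
    then show ?thesis by (intro exI[of _ "[a, b]"]) simp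
  next
    case False
    then have "a \<noteq> w" "b \<noteq> w"
      using adj \<open>a \<in> V\<close> \<open>b \<in> V\<close> \<open>a \<noteq> b\<close> by auto
    then show ?thesis
      using adj \<open>a \<in> V\<close> \<open>b \<in> V\<close> by (intro exI[of _ "[a, w, b]"]) simp
  qed
  then consider "p = [a, b]" | c where "p = [a, c, b]" "{a, b} \<notin> E"
    using shortest_path_within_distance_2[OF sp \<open>a \<noteq> b\<close>] by blast
  then show ?thesis
  proof cases
    case 1
    then show ?thesis using e by (auto simp: doubleton_eq_iff)
  next
    case 2
    then have "a \<noteq> w" "b \<noteq> w"
      using adj \<open>a \<in> V\<close> \<open>b \<in> V\<close> \<open>a \<noteq> b\<close> by auto
    then show ?thesis using 2 e \<open>x \<noteq> w\<close> by (auto simp: doubleton_eq_iff)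
  qed
qed

lemma strong_edge_geodetic_contains_non_universal:
  assumes G: "simple_graph V E" and w: "universal V E w" and S: "strong_edge_geodetic V E S"
  shows "V - {w} \<subseteq> S"
proof
  fix x assume x: "x \<in> V - {w}"
  from S obtain P where "S \<subseteq> V"
    and valid: "\<forall>u\<in>S. \<forall>v\<in>S. u \<noteq> v \<longrightarrow>
           (case P {u, v} of None \<Rightarrow> True
            | Some p \<Rightarrow> shortest_path E p u v \<or> shortest_path E p v u)"
    and covers: "\<forall>e\<in>E. \<exists>u\<in>S. \<exists>v\<in>S. u \<noteq> v \<and> (\<exists>p. P {u, v} = Some p \<and> e \<in> path_edges p)"
    unfolding strong_edge_geodetic_def by blast
  have "{w, x} \<in> E" using universal_adjacent(1)[OF G w] x by blast
  then obtain u v p where uv: "u \<in> S" "v \<in> S" "u \<noteq> v" "P {u, v} = Some p"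
    and e: "{w, x} \<in> path_edges p"
    using covers by blast
  have "u \<in> V" "v \<in> V" using uv \<open>S \<subseteq> V\<close> by auto
  have "shortest_path E p u v \<or> shortest_path E p v u" using valid uv by force
  then have "x = u \<or> x = v"
  proof
    assume "shortest_path E p u v"
    from universal_edge_on_shortest_path[OF G w this \<open>u \<in> V\<close> \<open>v \<in> V\<close> uv(3) e] x
    show ?thesis by blast
  next
    assume "shortest_path E p v u"
    from universal_edge_on_shortest_path[OF G w this \<open>v \<in> V\<close> \<open>u \<in> V\<close> _ e] x uv(3)
    show ?thesis by blast
  qed
  then show "x \<in> S" using uv by blast
qed

lemma card_strong_edge_geodetic_ge:
  assumes G: "simple_graph V E" and w: "universal V E w" and S: "strong_edge_geodetic V E S"
  shows "card V - 1 \<le> card S"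
proof -
  have "finite V" using G unfolding simple_graph_def by simp
  moreover have "S \<subseteq> V" using S unfolding strong_edge_geodetic_def by (rule conjunct1)
  ultimately have "card (V - {w}) \<le> card S"
    using strong_edge_geodetic_contains_non_universal[OF assms] by (meson card_mono finite_subset)
  then show ?thesis using diff_card_le_card_Diff[of "{w}" V] by simp
qed

lemma strong_edge_geodetic_if_geodesics:
  fixes g :: "'a \<Rightarrow> 'a \<Rightarrow> 'a list"
  assumes "S \<subseteq> V"
    and sym: "\<And>a b. path_edges (g a b) = path_edges (g b a)"
    and shortest: "\<And>a b. a \<in> S \<Longrightarrow> b \<in> S \<Longrightarrow> a \<noteq> b \<Longrightarrow> shortest_path E (g a b) a b"
    and covers: "\<And>e. e \<in> E \<Longrightarrow> \<exists>u\<in>S. \<exists>v\<in>S. u \<noteq> v \<and> e \<in> path_edges (g u v)"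
  shows "strong_edge_geodetic V E S"
proof -
  \<comment> \<open>The orientation picked by \<open>SOME\<close> is irrelevant because of \<open>sym\<close>.\<close>
  define P where "P e = Some (SOME p. \<exists>a b. e = {a, b} \<and> p = g a b)" for e
  have P: "\<exists>a b. {u, v} = {a, b} \<and> P {u, v} = Some (g a b)" for u v
    using someI_ex[of "\<lambda>p. \<exists>a b. {u, v} = {a, b} \<and> p = g a b"] unfolding P_def by blast
  have "case P {u, v} of None \<Rightarrow> True
      | Some p \<Rightarrow> shortest_path E p u v \<or> shortest_path E p v u"
    if "u \<in> S" "v \<in> S" "u \<noteq> v" for u v
  proof -
    obtain a b where "{u, v} = {a, b}" "P {u, v} = Some (g a b)" using P by blast
    then show ?thesis using shortest that by (auto simp: doubleton_eq_iff)
  qed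
  moreover have "\<exists>u\<in>S. \<exists>v\<in>S. u \<noteq> v \<and> (\<exists>p. P {u, v} = Some p \<and> e \<in> path_edges p)"
    if e: "e \<in> E" for e
  proof -
    obtain u v where uv: "u \<in> S" "v \<in> S" "u \<noteq> v" "e \<in> path_edges (g u v)"
      using covers[OF e] by blast
    obtain a b where ab: "{u, v} = {a, b}" "P {u, v} = Some (g a b)" using P by blast
    then have "e \<in> path_edges (g a b)" using uv(4) sym by (auto simp: doubleton_eq_iff)
    then show ?thesis using uv ab(2) by blast
  qed
  ultimately show ?thesis
    unfolding strong_edge_geodetic_def using \<open>S \<subseteq> V\<close> by blast
qed

definition geodesic_via :: "'a set set \<Rightarrow> 'a \<Rightarrow> 'a \<Rightarrow> 'a \<Rightarrow> 'a list" where
  "geodesic_via E w a b = (if {a, b} \<in> E then [a, b] else [a, w, b])"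

lemma path_edges_geodesic_via_commute:
  "path_edges (geodesic_via E w a b) = path_edges (geodesic_via E w b a)"
  unfolding geodesic_via_def by (auto simp: insert_commute)

lemma shortest_path_geodesic_via:
  assumes G: "simple_graph V E" and w: "universal V E w"
    and "a \<in> V" "b \<in> V" "a \<noteq> b"
  shows "shortest_path E (geodesic_via E w a b) a b"
proof (cases "{a, b} \<in> E")
  case True
  then show ?thesis using shortest_path_edge \<open>a \<noteq> b\<close> unfolding geodesic_via_def by simp
next
  case False
  note adj = universal_adjacent[OF G w]
  have "a \<noteq> w" "b \<noteq> w" using False adj assms(3-5) by auto
  then have "{a, w} \<in> E" "{w, b} \<in> E" using adj assms(3,4) by auto
  then show ?thesis using shortest_path_via False \<open>a \<noteq> b\<close> unfolding geodesic_via_def by simp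
qed

lemma strong_edge_geodetic_with_universal:
  assumes G: "simple_graph V E" and w: "universal V E w"
    and "V - {w} \<subseteq> S" and "S \<subseteq> V"
    and cover: "w \<in> S \<or> (\<forall>x \<in> V - {w}. \<exists>y \<in> S - {x}. {x, y} \<notin> E)"
  shows "strong_edge_geodetic V E S"
proof (rule strong_edge_geodetic_if_geodesics[OF \<open>S \<subseteq> V\<close> path_edges_geodesic_via_commute])
  show "shortest_path E (geodesic_via E w a b) a b" if "a \<in> S" "b \<in> S" "a \<noteq> b" for a b
    using shortest_path_geodesic_via[OF G w] that \<open>S \<subseteq> V\<close> by blast
next
  fix e assume "e \<in> E"
  then obtain a b where e: "e = {a, b}" "a \<noteq> b" "a \<in> V" "b \<in> V"
    using G unfolding simple_graph_def by blast
  consider "a \<noteq> w" "b \<noteq> w" | x where "e = {w, x}" "x \<in> V - {w}"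
    using e by (auto simp: insert_commute)
  then show "\<exists>u\<in>S. \<exists>v\<in>S. u \<noteq> v \<and> e \<in> path_edges (geodesic_via E w u v)"
  proof cases
    case 1
    then have "a \<in> S" "b \<in> S" using e \<open>V - {w} \<subseteq> S\<close> by auto
    moreover have "e \<in> path_edges (geodesic_via E w a b)"
      using e \<open>e \<in> E\<close> by (simp add: geodesic_via_def)
    ultimately show ?thesis using \<open>a \<noteq> b\<close> by blast
  next
    case 2
    then have "x \<in> S" "w \<noteq> x" using \<open>V - {w} \<subseteq> S\<close> by auto
    from cover show ?thesis
    proof
      assume "w \<in> S"
      moreover have "e \<in> path_edges (geodesic_via E w w x)"
        using 2 \<open>e \<in> E\<close> by (simp add: geodesic_via_def)
      ultimately show ?thesis using \<open>x \<in> S\<close> \<open>w \<noteq> x\<close> by blast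
    next
      assume "\<forall>x \<in> V - {w}. \<exists>y \<in> S - {x}. {x, y} \<notin> E"
      then obtain y where "y \<in> S" "x \<noteq> y" "{x, y} \<notin> E" using \<open>x \<in> V - {w}\<close> by blast
      moreover have "e \<in> path_edges (geodesic_via E w x y)"
        using 2(1) \<open>{x, y} \<notin> E\<close> by (auto simp: geodesic_via_def doubleton_eq_iff)
      ultimately show ?thesis using \<open>x \<in> S\<close> by (meson bexI)
    qed
  qed
qed

lemma sge_le_card: "strong_edge_geodetic V E S \<Longrightarrow> sge V E \<le> card S"
  unfolding sge_def by (rule Least_le) blast

lemma sge_lower_bound:
  assumes "strong_edge_geodetic V E S" and "\<And>S. strong_edge_geodetic V E S \<Longrightarrow> k \<le> card S"
  shows "k \<le> sge V E"
proof -
  have "\<exists>S. strong_edge_geodetic V E S \<and> card S = sge V E"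
    unfolding sge_def by (rule LeastI_ex) (use assms(1) in blast)
  then obtain S' where "strong_edge_geodetic V E S'" "card S' = sge V E" by blast
  then show ?thesis using assms(2) by metis
qed

lemma non_universal_has_non_neighbour:
  assumes G: "simple_graph V E" and w: "universal V E w"
    and "x \<in> V" and "x \<noteq> w" and "\<not> universal V E x"
  shows "\<exists>y \<in> V - {w, x}. {x, y} \<notin> E"
proof -
  obtain y where "y \<in> V - {x}" "{x, y} \<notin> E"
    using assms(3,5) universal_iff[OF G] by blast
  moreover have "y \<noteq> w" using universal_adjacent(2)[OF G w \<open>x \<in> V\<close> \<open>x \<noteq> w\<close>] \<open>{x, y} \<notin> E\<close> by blast
  ultimately show ?thesis by blast
qed

theorem mainTheorem11:
  fixes V :: "'a set" and E :: "'a set set"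
  assumes "connected_graph V E"
    and "\<exists>u. universal V E u"
  shows "sge V E \<ge> card V - 1 \<and>
         ((\<exists>!u. universal V E u) \<longrightarrow> sge V E = card V - 1)"
proof -
  have G: "simple_graph V E" using assms(1) unfolding connected_graph_def by simp
  obtain w where w: "universal V E w" using assms(2) by blast
  have "w \<in> V" using w unfolding universal_def by simp
  have "strong_edge_geodetic V E V"
    using strong_edge_geodetic_with_universal[OF G w] \<open>w \<in> V\<close> by blast
  then have "card V - 1 \<le> sge V E"
    using sge_lower_bound card_strong_edge_geodetic_ge[OF G w] by blast
  moreover have "sge V E \<le> card V - 1" if "\<exists>!u. universal V E u"
  proof -
    have "\<forall>x \<in> V - {w}. \<exists>y \<in> (V - {w}) - {x}. {x, y} \<notin> E"
      using non_universal_has_non_neighbour[OF G w] that w by blast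
    then have "strong_edge_geodetic V E (V - {w})"
      using strong_edge_geodetic_with_universal[OF G w] by blast
    then show ?thesis using sge_le_card \<open>w \<in> V\<close> by fastforce
  qed
  ultimately show ?thesis by auto
qed

end
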